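(* Let $A\in\mathbb{R}^{m\times n}$ with $\operatorname{rk}(A)=m$, $b\in\mathbb{R}^m$, $P=\{x\in\mathbb{R}^n: Ax=b,\ x\ge\mathbb{0}\}$. Let $B\subseteq[n]$ be a feasible basis, $N=[n]\setminus B$, $x^*=(A_B^{-1}b,\mathbb{0}_N)\in P$, and let $x^{(0)}$ be a vertex of $P$. Consider the following procedure: for $t=0,1,\dots$, while $x^{(t)}\ne x^*$, take a conformal circuit decomposition $x^*-x^{(t)}=\sum_{j=1}^k h^{(j)}$ with $k\le n-m$, choose $g^{(t)}=h^{(j)}$ for some $j$ maximizing $\|h^{(j)}_N\|_1$, and set $x^{(t+1)}=\operatorname{aug}_P(x^{(t)},g^{(t)})$. Then for every iteration $t\ge 0$ of this procedure, $\|x^{(t+1)}_N\|_1\le\big(1-\frac{1}{n-m}\big)\|x^{(t)}_N\|_1$, and $|x^{(t+1)}_i-x^{(t)}_i|\le(n-m)|x^*_i-x^{(t)}_i|$ for all $i\in[n]$.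
   Context: An elementary vector of $\ker(A)$ is a nonzero $g\in\ker(A)$ with inclusion-minimal support among nonzero vectors of $\ker(A)$. Vectors $x,y$ are sign-compatible if $x_iy_i\ge0$ for all $i$; $x\sqsubseteq y$ means they are sign-compatible and $|x_i|\le|y_i|$ for all $i$. A conformal circuit decomposition of $x\in\ker(A)$ is an expression $x=\sum_{j=1}^k h^{(j)}$ with each $h^{(j)}$ an elementary vector of $\ker(A)$ and $h^{(j)}\sqsubseteq x$ (one with $k\le\dim\ker(A)=n-m$ always exists). For $x\in P$ and elementary $g$, $\operatorname{aug}_P(x,g)=x+\alpha g$ with $\alpha=\max\{\bar\alpha: x+\bar\alpha g\in P\}$. *)

theory Defs
  imports "HOL-Analysis.Analysis"
begin

definition std_poly :: "real^'n^'m \<Rightarrow> real^'m \<Rightarrow> (real^'n) set" where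
  "std_poly A b = {x. A *v x = b \<and> (\<forall>i. 0 \<le> x $ i)}"

definition supp_vec :: "real^'n \<Rightarrow> 'n set" where
  "supp_vec x = {i. x $ i \<noteq> 0}"

definition elementary :: "real^'n^'m \<Rightarrow> real^'n \<Rightarrow> bool" where
  "elementary A g \<longleftrightarrow> g \<noteq> 0 \<and> A *v g = 0 \<and>
     (\<forall>h. h \<noteq> 0 \<and> A *v h = 0 \<and> supp_vec h \<subseteq> supp_vec g \<longrightarrow> supp_vec h = supp_vec g)"

definition sign_compatible :: "real^'n \<Rightarrow> real^'n \<Rightarrow> bool" where
  "sign_compatible x y \<longleftrightarrow> (\<forall>i. x $ i * y $ i \<ge> 0)"

definition conf_le :: "real^'n \<Rightarrow> real^'n \<Rightarrow> bool" where
  "conf_le x y \<longleftrightarrow> sign_compatible x y \<and> (\<forall>i. \<bar>x $ i\<bar> \<le> \<bar>y $ i\<bar>)"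

definition conf_circ_decomp :: "real^'n^'m \<Rightarrow> real^'n \<Rightarrow> (real^'n) list \<Rightarrow> bool" where
  "conf_circ_decomp A x hs \<longleftrightarrow> sum_list hs = x \<and>
     (\<forall>h\<in>set hs. elementary A h \<and> conf_le h x) \<and>
     length hs \<le> CARD('n) - CARD('m)"

definition aug :: "(real^'n) set \<Rightarrow> real^'n \<Rightarrow> real^'n \<Rightarrow> real^'n" where
  "aug P x g = x + (GREATEST a. x + a *\<^sub>R g \<in> P) *\<^sub>R g"

definition norm1_on :: "'n set \<Rightarrow> real^'n \<Rightarrow> real" where
  "norm1_on S x = (\<Sum>i\<in>S. \<bar>x $ i\<bar>)"

definition is_basis :: "real^'n^'m \<Rightarrow> 'n set \<Rightarrow> bool" where
  "is_basis A B \<longleftrightarrow> card B = CARD('m) \<and> inj_on (\<lambda>j. column j A) B \<and>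
     \<not> dependent ((\<lambda>j. column j A) ` B)"

text \<open>Basic solution x = (A_B^{-1} b, 0_N): the unique x with Ax=b and x_N = 0.\<close>
definition basic_sol :: "real^'n^'m \<Rightarrow> real^'m \<Rightarrow> 'n set \<Rightarrow> real^'n" where
  "basic_sol A b B = (THE x. A *v x = b \<and> (\<forall>j. j \<notin> B \<longrightarrow> x $ j = 0))"

definition feasible_basis :: "real^'n^'m \<Rightarrow> real^'m \<Rightarrow> 'n set \<Rightarrow> bool" where
  "feasible_basis A b B \<longleftrightarrow> is_basis A B \<and> (\<forall>i. 0 \<le> basic_sol A b B $ i)"

end

theory Submission
  imports Defs
begin

(* Write x* for the basic solution, N for the non-basic indices, g for the chosen circuit
   of x* - x and y = x + alpha g for the new iterate. Conformality puts x + g coordinatewise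
   between x and x*, so x + g is in P and the step length alpha is at least 1. Since
   x*_N = 0 it also forces g_N <= 0, and g_N <> 0 because no nonzero kernel vector is
   supported on a basis. Hence |y_N|_1 = |x_N|_1 - alpha |g_N|_1, while conformality of the
   decomposition gives |x_N|_1 = sum_j |h_N^(j)|_1 <= (n - m) |g_N|_1. This yields the first
   bound; y_N >= 0 yields alpha <= n - m and thus the second bound, as |g_i| <= |x*_i - x_i|. *)

lemma matrix_vector_mult_zero_off:
  fixes A :: "real^'n^'m"
  assumes "\<forall>j. j \<notin> B \<longrightarrow> v $ j = 0"
  shows "A *v v = (\<Sum>j\<in>B. v $ j *\<^sub>R column j A)"
proof -
  have "A *v v = (\<Sum>j\<in>UNIV. v $ j *\<^sub>R column j A)"
    by (simp add: matrix_mult_sum scalar_mult_eq_scaleR)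
  also have "\<dots> = (\<Sum>j\<in>B. v $ j *\<^sub>R column j A)"
    by (rule sum.mono_neutral_right) (use assms in auto)
  finally show ?thesis .
qed

lemma is_basis_kernel_zero_off:
  fixes A :: "real^'n^'m"
  assumes basis: "is_basis A B" and "A *v v = 0" and off: "\<forall>j. j \<notin> B \<longrightarrow> v $ j = 0"
  shows "v = 0"
proof -
  let ?c = "\<lambda>j. column j A"
  have inj: "inj_on ?c B" and ind: "independent (?c ` B)"
    using basis by (auto simp: is_basis_def)
  define u where "u w = v $ inv_into B ?c w" for w
  have "(\<Sum>w\<in>?c ` B. u w *\<^sub>R w) = (\<Sum>j\<in>B. v $ j *\<^sub>R ?c j)"
    by (simp add: sum.reindex[OF inj] u_def inv_into_f_f[OF inj])
  also have "\<dots> = 0"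
    using matrix_vector_mult_zero_off[OF off, where A = A] \<open>A *v v = 0\<close> by simp
  finally have "\<forall>w\<in>?c ` B. u w = 0"
    using ind dependent_finite[of "?c ` B"] by auto
  then have "\<forall>j\<in>B. v $ j = 0"
    by (auto simp: u_def inv_into_f_f[OF inj])
  with off show ?thesis by (auto simp: vec_eq_iff)
qed

lemma is_basis_columns_span:
  fixes A :: "real^'n^'m"
  assumes "is_basis A B"
  shows "span ((\<lambda>j. column j A) ` B) = UNIV"
proof -
  let ?c = "\<lambda>j. column j A"
  have "card (?c ` B) = CARD('m)" and "independent (?c ` B)"
    using assms card_image[of ?c B] by (auto simp: is_basis_def)
  then show ?thesis
    using card_ge_dim_independent[of "?c ` B" UNIV] by (auto simp: dim_UNIV)
qed

lemma basic_sol: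
  fixes A :: "real^'n^'m"
  assumes basis: "is_basis A B"
  shows "A *v basic_sol A b B = b" and "\<forall>j. j \<notin> B \<longrightarrow> basic_sol A b B $ j = 0"
proof -
  let ?c = "\<lambda>j. column j A"
  have inj: "inj_on ?c B" using basis by (simp add: is_basis_def)
  have "finite (?c ` B)" by simp
  then obtain u where u: "b = (\<Sum>w\<in>?c ` B. u w *\<^sub>R w)"
    using is_basis_columns_span[OF basis] span_finite by blast
  define y :: "real^'n" where "y = (\<chi> j. if j \<in> B then u (?c j) else 0)"
  have y_off: "\<forall>j. j \<notin> B \<longrightarrow> y $ j = 0" by (simp add: y_def)
  have "A *v y = b"
    unfolding matrix_vector_mult_zero_off[OF y_off] u sum.reindex[OF inj]
    by (simp add: y_def)
  moreover have "z = y" if "A *v z = b" "\<forall>j. j \<notin> B \<longrightarrow> z $ j = 0" for z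
    using is_basis_kernel_zero_off[OF basis, of "z - y"] that \<open>A *v y = b\<close> y_off
    by (simp add: matrix_vector_mult_diff_distrib)
  ultimately have "\<exists>!z. A *v z = b \<and> (\<forall>j. j \<notin> B \<longrightarrow> z $ j = 0)"
    using y_off by blast
  from theI'[OF this] show "A *v basic_sol A b B = b" "\<forall>j. j \<notin> B \<longrightarrow> basic_sol A b B $ j = 0"
    unfolding basic_sol_def by blast+
qed

lemma basic_sol_in_std_poly:
  fixes A :: "real^'n^'m"
  assumes "feasible_basis A b B"
  shows "basic_sol A b B \<in> std_poly A b"
  using assms basic_sol(1)[of A B b] by (simp add: feasible_basis_def std_poly_def)

definition aug_step :: "(real^'n) set \<Rightarrow> real^'n \<Rightarrow> real^'n \<Rightarrow> real" where
  "aug_step P x g = (GREATEST a. x + a *\<^sub>R g \<in> P)"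

lemma aug_eq_aug_step: "aug P x g = x + aug_step P x g *\<^sub>R g"
  by (simp add: aug_def aug_step_def)

lemma aug_greatest_closed:
  fixes P :: "(real^'n) set"
  assumes "closed P" and "x \<in> P" and bdd: "bdd_above {a. x + a *\<^sub>R g \<in> P}"
  shows "aug P x g \<in> P" and "x + a *\<^sub>R g \<in> P \<Longrightarrow> a \<le> aug_step P x g"
proof -
  define S where "S = (\<lambda>a. x + a *\<^sub>R g) -` P"
  have "closed S"
    unfolding S_def by (intro continuous_closed_vimage \<open>closed P\<close> continuous_intros)
  moreover have "0 \<in> S" using \<open>x \<in> P\<close> by (simp add: S_def)
  moreover have "bdd_above S" using bdd by (simp add: S_def vimage_def)
  ultimately have "Sup S \<in> S" by (intro closed_contains_Sup) auto
  moreover have "a \<le> Sup S" if "a \<in> S" for a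
    using that \<open>bdd_above S\<close> by (rule cSup_upper)
  ultimately have "aug_step P x g = Sup S"
    unfolding aug_step_def S_def by (intro Greatest_equality) (auto simp: S_def)
  with \<open>Sup S \<in> S\<close> \<open>\<And>a. a \<in> S \<Longrightarrow> a \<le> Sup S\<close>
  show "aug P x g \<in> P" and "x + a *\<^sub>R g \<in> P \<Longrightarrow> a \<le> aug_step P x g"
    by (auto simp: S_def aug_eq_aug_step)
qed

lemma closed_std_poly: "closed (std_poly A b)"
  unfolding std_poly_def
  by (intro closed_Collect_conj closed_Collect_eq closed_Collect_all closed_Collect_le
      matrix_vector_mult_linear_continuous_on continuous_intros)

lemma add_scaleR_kernel_in_std_poly_iff:
  fixes A :: "real^'n^'m"
  assumes "A *v x = b" and "A *v g = 0"
  shows "x + a *\<^sub>R g \<in> std_poly A b \<longleftrightarrow> (\<forall>i. 0 \<le> x $ i + a * g $ i)"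
  using assms by (simp add: std_poly_def matrix_vector_right_distrib matrix_vector_mult_scaleR)

lemma bdd_above_steps_std_poly:
  fixes A :: "real^'n^'m"
  assumes "g $ k < 0"
  shows "bdd_above {a. x + a *\<^sub>R g \<in> std_poly A b}"
proof (rule bdd_aboveI)
  fix a assume "a \<in> {a. x + a *\<^sub>R g \<in> std_poly A b}"
  then have "0 \<le> x $ k + a * g $ k" by (simp add: std_poly_def)
  then have "a * (- g $ k) \<le> x $ k" by simp
  with assms show "a \<le> x $ k / (- g $ k)" by (metis pos_le_divide_eq neg_0_less_iff_less)
qed

lemma conf_le_nonneg: "conf_le h x \<Longrightarrow> 0 \<le> x $ i \<Longrightarrow> 0 \<le> h $ i"
  unfolding conf_le_def sign_compatible_def
  by (metis abs_le_zero_iff eq_abs_iff' zero_le_mult_iff)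

lemma conf_le_nonpos: "conf_le h x \<Longrightarrow> x $ i \<le> 0 \<Longrightarrow> h $ i \<le> 0"
  unfolding conf_le_def sign_compatible_def
  by (smt (verit) zero_le_mult_iff)

lemma conf_le_diff_add_nonneg:
  assumes "conf_le h (y - x)" and "0 \<le> x $ i" and "0 \<le> y $ i"
  shows "0 \<le> x $ i + h $ i"
proof (cases "x $ i \<le> y $ i")
  case True
  then show ?thesis using conf_le_nonneg[OF assms(1), of i] assms(2) by simp
next
  case False
  have "\<bar>h $ i\<bar> \<le> \<bar>y $ i - x $ i\<bar>" using assms(1) by (simp add: conf_le_def)
  then show ?thesis using False assms(3) by linarith
qed

lemma sum_list_vec_nth: "sum_list hs $ i = (\<Sum>h\<leftarrow>hs. h $ i)"
  by (induction hs) auto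

lemma sum_sum_list_swap: "(\<Sum>i\<in>S. \<Sum>h\<leftarrow>hs. f h i) = (\<Sum>h\<leftarrow>hs. \<Sum>i\<in>S. f h i)"
  by (induction hs) (auto simp: sum.distrib)

lemma abs_nth_conformal_sum:
  assumes sum: "sum_list hs = x" and conf: "\<forall>h\<in>set hs. conf_le h x"
  shows "\<bar>x $ i\<bar> = (\<Sum>h\<leftarrow>hs. \<bar>h $ i\<bar>)"
proof (cases "0 \<le> x $ i")
  case True
  then have "\<forall>h\<in>set hs. 0 \<le> h $ i" using conf conf_le_nonneg by blast
  then have "(\<Sum>h\<leftarrow>hs. \<bar>h $ i\<bar>) = (\<Sum>h\<leftarrow>hs. h $ i)"
    by (intro arg_cong[where f = sum_list] map_cong) auto
  then show ?thesis using True by (simp add: sum[symmetric] sum_list_vec_nth)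
next
  case False
  then have "\<forall>h\<in>set hs. h $ i \<le> 0" using conf conf_le_nonpos by force
  then have "(\<Sum>h\<leftarrow>hs. \<bar>h $ i\<bar>) = (\<Sum>h\<leftarrow>hs. - h $ i)"
    by (intro arg_cong[where f = sum_list] map_cong) auto
  moreover have "(\<Sum>h\<leftarrow>hs. - h $ i) = - (\<Sum>h\<leftarrow>hs. h $ i)"
    by (induction hs) auto
  ultimately show ?thesis using False by (simp add: sum[symmetric] sum_list_vec_nth)
qed

lemma norm1_on_conformal_sum:
  assumes "sum_list hs = x" and "\<forall>h\<in>set hs. conf_le h x"
  shows "norm1_on S x = (\<Sum>h\<leftarrow>hs. norm1_on S h)"
  unfolding norm1_on_def abs_nth_conformal_sum[OF assms] by (rule sum_sum_list_swap)

lemma norm1_on_conformal_sum_le: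
  assumes "sum_list hs = x" and "\<forall>h\<in>set hs. conf_le h x"
    and "\<forall>h\<in>set hs. norm1_on S h \<le> c"
  shows "norm1_on S x \<le> real (length hs) * c"
proof -
  have "norm1_on S x \<le> (\<Sum>h\<leftarrow>hs. c)"
    unfolding norm1_on_conformal_sum[OF assms(1,2)] using assms(3) by (intro sum_list_mono) auto
  then show ?thesis by (simp add: sum_list_triv)
qed

lemma norm1_on_add_scaleR_nonpos:
  assumes "\<forall>i\<in>S. 0 \<le> x $ i + a * g $ i" and "\<forall>i\<in>S. 0 \<le> x $ i" and "\<forall>i\<in>S. g $ i \<le> 0"
  shows "norm1_on S (x + a *\<^sub>R g) = norm1_on S x - a * norm1_on S g"
proof -
  have "norm1_on S (x + a *\<^sub>R g) = (\<Sum>i\<in>S. x $ i + a * g $ i)"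
    unfolding norm1_on_def using assms(1) by (intro sum.cong) auto
  also have "\<dots> = (\<Sum>i\<in>S. \<bar>x $ i\<bar>) - a * (\<Sum>i\<in>S. \<bar>g $ i\<bar>)"
    using assms(2,3) by (simp add: sum.distrib sum_distrib_left sum_negf)
  finally show ?thesis by (simp add: norm1_on_def)
qed

lemma aug_conformal_kernel:
  fixes A :: "real^'n^'m"
  assumes x: "x \<in> std_poly A b" and y: "y \<in> std_poly A b"
    and Ag: "A *v g = 0" and conf: "conf_le g (y - x)" and "g $ k < 0"
  shows "aug (std_poly A b) x g \<in> std_poly A b" and "1 \<le> aug_step (std_poly A b) x g"
proof -
  have Ax: "A *v x = b" using x by (simp add: std_poly_def)
  have "x + 1 *\<^sub>R g \<in> std_poly A b"
    unfolding add_scaleR_kernel_in_std_poly_iff[OF Ax Ag]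
    using x y conf_le_diff_add_nonneg[OF conf] by (simp add: std_poly_def)
  then show "aug (std_poly A b) x g \<in> std_poly A b" and "1 \<le> aug_step (std_poly A b) x g"
    using aug_greatest_closed[OF closed_std_poly x bdd_above_steps_std_poly[OF \<open>g $ k < 0\<close>]]
    by blast+
qed

lemma conformal_kernel_toward_basic_sol:
  fixes A :: "real^'n^'m"
  assumes fb: "feasible_basis A b B" and x: "x \<in> std_poly A b"
    and conf: "conf_le g (basic_sol A b B - x)" and Ag: "A *v g = 0" and "g \<noteq> 0"
  shows "\<forall>i\<in>- B. g $ i \<le> 0" and "\<exists>k\<in>- B. g $ k < 0"
proof -
  have basis: "is_basis A B" using fb by (simp add: feasible_basis_def)
  show nonpos: "\<forall>i\<in>- B. g $ i \<le> 0"
    using x basic_sol(2)[OF basis] by (auto simp: std_poly_def intro: conf_le_nonpos[OF conf])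
  obtain k where "k \<in> - B" and "g $ k \<noteq> 0"
    using is_basis_kernel_zero_off[OF basis Ag] \<open>g \<noteq> 0\<close> by auto
  with nonpos show "\<exists>k\<in>- B. g $ k < 0" by force
qed

lemma aug_max_conformal_circuit:
  fixes A :: "real^'n^'m"
  assumes fb: "feasible_basis A b B" and x: "x \<in> std_poly A b"
    and dec: "conf_circ_decomp A (basic_sol A b B - x) hs" and g: "g \<in> set hs"
    and max: "\<forall>h\<in>set hs. norm1_on (- B) h \<le> norm1_on (- B) g"
  shows "aug (std_poly A b) x g \<in> std_poly A b"
    and "norm1_on (- B) (aug (std_poly A b) x g)
           \<le> (1 - 1 / real (CARD('n) - CARD('m))) * norm1_on (- B) x"
    and "\<bar>aug (std_poly A b) x g $ i - x $ i\<bar>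
           \<le> real (CARD('n) - CARD('m)) * \<bar>basic_sol A b B $ i - x $ i\<bar>"
proof -
  let ?P = "std_poly A b" and ?xs = "basic_sol A b B" and ?K = "real (CARD('n) - CARD('m))"
  define \<alpha> X G where "\<alpha> = aug_step ?P x g" and "X = norm1_on (- B) x" and "G = norm1_on (- B) g"
  have xs_off: "\<forall>i. i \<notin> B \<longrightarrow> ?xs $ i = 0"
    using fb basic_sol(2)[of A B b] by (simp add: feasible_basis_def)
  have Ax: "A *v x = b" and x_nonneg: "\<forall>i. 0 \<le> x $ i" using x by (simp_all add: std_poly_def)
  have sum: "sum_list hs = ?xs - x" and conf: "\<forall>h\<in>set hs. conf_le h (?xs - x)"
    and Ag: "A *v g = 0" and "g \<noteq> 0" and len: "length hs \<le> CARD('n) - CARD('m)"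
    using dec g by (auto simp: conf_circ_decomp_def elementary_def)
  note g_off = conformal_kernel_toward_basic_sol[OF fb x bspec[OF conf g] Ag \<open>g \<noteq> 0\<close>]
  obtain k where "k \<in> - B" and "g $ k < 0" using g_off(2) by blast
  have "0 < G"
    using member_le_sum[of k "- B" "\<lambda>i. \<bar>g $ i\<bar>"] \<open>k \<in> - B\<close> \<open>g $ k < 0\<close>
    by (simp add: G_def norm1_on_def)
  note aug = aug_conformal_kernel[OF x basic_sol_in_std_poly[OF fb] Ag bspec[OF conf g] \<open>g $ k < 0\<close>]
  have y: "aug ?P x g = x + \<alpha> *\<^sub>R g" by (simp add: aug_eq_aug_step \<alpha>_def)
  have norm_y: "norm1_on (- B) (aug ?P x g) = X - \<alpha> * G"
    using aug(1) x_nonneg g_off(1)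
    unfolding y X_def G_def add_scaleR_kernel_in_std_poly_iff[OF Ax Ag]
    by (intro norm1_on_add_scaleR_nonpos) auto
  have "X \<le> ?K * G"
  proof -
    have "X = norm1_on (- B) (?xs - x)" unfolding X_def norm1_on_def using xs_off by simp
    also have "\<dots> \<le> real (length hs) * G"
      using norm1_on_conformal_sum_le[OF sum conf] max G_def by blast
    also have "\<dots> \<le> ?K * G" using len \<open>0 < G\<close> by (intro mult_right_mono) auto
    finally show ?thesis .
  qed
  have "0 < ?K" using g len by (cases hs) auto
  have "1 \<le> \<alpha>" using aug(2) by (simp add: \<alpha>_def)
  show "aug ?P x g \<in> ?P" by (rule aug(1))
  have "X / ?K \<le> G" using \<open>X \<le> ?K * G\<close> \<open>0 < ?K\<close> by (simp add: pos_divide_le_eq mult.commute)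
  moreover have "G \<le> \<alpha> * G" using \<open>1 \<le> \<alpha>\<close> \<open>0 < G\<close> by simp
  ultimately show "norm1_on (- B) (aug ?P x g) \<le> (1 - 1 / ?K) * X"
    unfolding norm_y by (simp add: algebra_simps)
  have "0 \<le> norm1_on (- B) (aug ?P x g)" by (simp add: norm1_on_def sum_nonneg)
  then have "\<alpha> * G \<le> ?K * G" using norm_y \<open>X \<le> ?K * G\<close> by linarith
  then have "\<alpha> \<le> ?K" using \<open>0 < G\<close> by simp
  have "\<bar>aug ?P x g $ i - x $ i\<bar> = \<alpha> * \<bar>g $ i\<bar>" using aug(2) by (simp add: y \<alpha>_def abs_mult)
  also have "\<dots> \<le> ?K * \<bar>(?xs - x) $ i\<bar>"
    using \<open>\<alpha> \<le> ?K\<close> \<open>1 \<le> \<alpha>\<close> conf g by (intro mult_mono) (auto simp: conf_le_def)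
  finally show "\<bar>aug ?P x g $ i - x $ i\<bar> \<le> ?K * \<bar>?xs $ i - x $ i\<bar>" by simp
qed

theorem lemma3p1:
  fixes A :: "real^'n^'m" and b :: "real^'m" and B :: "'n set"
    and x :: "nat \<Rightarrow> real^'n"
  assumes rank: "rank A = CARD('m)"
    and fb: "feasible_basis A b B"
    and vert: "x 0 extreme_point_of std_poly A b"
    and step: "\<And>t. (\<forall>s\<le>t. x s \<noteq> basic_sol A b B) \<Longrightarrow>
        (\<exists>hs j. conf_circ_decomp A (basic_sol A b B - x t) hs \<and> j < length hs \<and>
           (\<forall>j'<length hs. norm1_on (- B) (hs ! j') \<le> norm1_on (- B) (hs ! j)) \<and>
           x (Suc t) = aug (std_poly A b) (x t) (hs ! j))"
    and t_iter: "\<forall>s\<le>t. x s \<noteq> basic_sol A b B"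
  shows "norm1_on (- B) (x (Suc t))
           \<le> (1 - 1 / real (CARD('n) - CARD('m))) * norm1_on (- B) (x t)
         \<and> (\<forall>i. \<bar>x (Suc t) $ i - x t $ i\<bar>
               \<le> real (CARD('n) - CARD('m)) * \<bar>basic_sol A b B $ i - x t $ i\<bar>)"
proof -
  let ?P = "std_poly A b" and ?xs = "basic_sol A b B" and ?K = "real (CARD('n) - CARD('m))"
  have step_ok: "x (Suc s) \<in> ?P
      \<and> norm1_on (- B) (x (Suc s)) \<le> (1 - 1 / ?K) * norm1_on (- B) (x s)
      \<and> (\<forall>i. \<bar>x (Suc s) $ i - x s $ i\<bar> \<le> ?K * \<bar>?xs $ i - x s $ i\<bar>)"
    if "s \<le> t" and "x s \<in> ?P" for s
  proof -
    obtain hs j where dec: "conf_circ_decomp A (?xs - x s) hs" and "j < length hs"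
      and max: "\<forall>j'<length hs. norm1_on (- B) (hs ! j') \<le> norm1_on (- B) (hs ! j)"
      and next_x: "x (Suc s) = aug ?P (x s) (hs ! j)"
      using step t_iter \<open>s \<le> t\<close> by (meson order_trans)
    have "\<forall>h\<in>set hs. norm1_on (- B) h \<le> norm1_on (- B) (hs ! j)"
      using max by (auto simp: in_set_conv_nth)
    from aug_max_conformal_circuit[OF fb \<open>x s \<in> ?P\<close> dec nth_mem[OF \<open>j < length hs\<close>] this]
    show ?thesis unfolding next_x by blast
  qed
  have "x s \<in> ?P" if "s \<le> t" for s
    using that
  proof (induction s)
    case 0
    show ?case using vert by (simp add: extreme_point_of_def)
  next
    case (Suc s)
    then show ?case using step_ok by simp
  qed
  then show ?thesis using step_ok by blast
qed

end
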